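(* Let $\{\vec L_n\}_{n=1}^6$ be an oriented right-angled hexagon in $\mathbb H^3$ (indices modulo $6$), and for each $n$ let $\delta_n\in\mathbb C/2\pi i\mathbb Z$ be one of the two complex half side-lengths along $\vec L_n$. Then there exists $\varepsilon\in\{1,-1\}$ (depending on the choices of the $\delta_n$) such that \begin{align*} \cosh(\delta_1+\delta_3)\cosh\delta_2&=\varepsilon\cosh(\delta_4+\delta_6)\cosh\delta_5,\\ -\sinh(\delta_1+\delta_3)\cosh\delta_2&=\varepsilon\cosh(\delta_4-\delta_6)\sinh\delta_5,\\ -\cosh(\delta_1-\delta_3)\sinh\delta_2&=\varepsilon\sinh(\delta_4+\delta_6)\cosh\delta_5,\\ \sinh(\delta_1-\delta_3)\sinh\delta_2&=\varepsilon\sinh(\delta_4-\delta_6)\sinh\delta_5. \end{align*}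
   Context: Use the upper half-space model of $\mathbb H^3$ with boundary $\mathbb C\cup\{\infty\}$; $\vec L_{[u,v]}$ denotes the geodesic with endpoints $u,v$ oriented from $u$ to $v$. An oriented right-angled hexagon in $\mathbb H^3$ is a cyclic six-tuple of oriented complete geodesics $\vec L_1,\dots,\vec L_6$ such that $L_n$ and $L_{n+1}$ intersect perpendicularly for each $n$ modulo 6. Complex side-length along $\vec L_n$: let $\eta$ be the unique orientation-preserving isometry with $\eta(\vec L_n)=\vec L_{[0,\infty]}$ and $\eta(\vec L_{n-1})=\vec L_{[-1,1]}$; then $\eta(\vec L_{n+1})=\vec L_{[-z,z]}$ for some $z\in\mathbb C\setminus\{0\}$ and $\sigma_n=\log z\in\mathbb C/2\pi i\mathbb Z$. The two complex half side-lengths along $\vec L_n$ are the two elements $\delta\in\mathbb C/2\pi i\mathbb Z$ with $2\delta=\sigma_n$ (they differ by $\pi i$). *)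

theory Defs
  imports "HOL-Analysis.Analysis"
begin

text \<open>Upper half-space model of hyperbolic 3-space: points of real^3 with third
  coordinate positive; a point (z,t) with z in C, t > 0 is  vector [Re z, Im z, t].\<close>

definition H3 :: "(real^3) set" where
  "H3 = {x. x $ 3 > 0}"

definition hpt :: "complex \<Rightarrow> real \<Rightarrow> real^3" where
  "hpt z t = vector [Re z, Im z, t]"

definition hdist :: "real^3 \<Rightarrow> real^3 \<Rightarrow> real" where
  "hdist x y = arcosh (1 + (norm (x - y))\<^sup>2 / (2 * (x $ 3) * (y $ 3)))"

text \<open>Boundary points: C \<union> {\<infinity>}, with None = \<infinity>.
  An oriented complete geodesic is given by its ordered pair of distinct endpoints
  (start, end).\<close>
type_synonym bpt = "complex option"
type_synonym ogeod = "bpt \<times> bpt"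

definition valid_ogeod :: "ogeod \<Rightarrow> bool" where
  "valid_ogeod L \<longleftrightarrow> fst L \<noteq> snd L"

text \<open>Unit-speed parametrisation of the oriented geodesic from u to v
  (tends to u as s \<rightarrow> -\<infinity> and to v as s \<rightarrow> +\<infinity>).\<close>
definition geod_param :: "ogeod \<Rightarrow> real \<Rightarrow> real^3" where
  "geod_param L s = (case L of
      (None, Some b) \<Rightarrow> hpt b (exp (- s))
    | (Some a, None) \<Rightarrow> hpt a (exp s)
    | (Some a, Some b) \<Rightarrow>
        (let c = (a + b) / 2; r = cmod (b - a) / 2; w = (b - a) / of_real (cmod (b - a))
         in hpt (c + of_real (r * tanh s) * w) (r / cosh s))
    | _ \<Rightarrow> undefined)"

text \<open>Two geodesics intersect perpendicularly: they meet at a point where their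
  tangent vectors are orthogonal (the hyperbolic metric is conformal to the
  Euclidean one, so Euclidean and hyperbolic angles agree).\<close>
definition perp_meet :: "ogeod \<Rightarrow> ogeod \<Rightarrow> bool" where
  "perp_meet L M \<longleftrightarrow> (\<exists>s1 s2. geod_param L s1 = geod_param M s2 \<and>
      vector_derivative (geod_param L) (at s1) \<bullet> vector_derivative (geod_param M) (at s2) = 0)"

definition orient_isom :: "(real^3 \<Rightarrow> real^3) \<Rightarrow> bool" where
  "orient_isom f \<longleftrightarrow> bij_betw f H3 H3 \<and>
     (\<forall>x\<in>H3. \<forall>y\<in>H3. hdist (f x) (f y) = hdist x y) \<and>
     (\<forall>x\<in>H3. \<exists>D. (f has_derivative D) (at x) \<and> det (matrix D) > 0)"

definition maps_ogeod :: "(real^3 \<Rightarrow> real^3) \<Rightarrow> ogeod \<Rightarrow> ogeod \<Rightarrow> bool" where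
  "maps_ogeod f L M \<longleftrightarrow> (\<exists>c. \<forall>s. f (geod_param L s) = geod_param M (s + c))"

definition ra_hexagon :: "(nat \<Rightarrow> ogeod) \<Rightarrow> bool" where
  "ra_hexagon L \<longleftrightarrow> (\<forall>n. L (n + 6) = L n) \<and> (\<forall>n. valid_ogeod (L n)) \<and>
     (\<forall>n. perp_meet (L n) (L (n + 1)))"

text \<open>delta is a complex half side-length along L n (in the hexagon L), given by a
  complex representative of its class in C / 2 pi i Z: 2 delta = log z.\<close>
definition half_side_length :: "(nat \<Rightarrow> ogeod) \<Rightarrow> nat \<Rightarrow> complex \<Rightarrow> bool" where
  "half_side_length L n \<delta> \<longleftrightarrow> (\<exists>\<eta> z. orient_isom \<eta> \<and>
      maps_ogeod \<eta> (L n) (Some 0, None) \<and>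
      maps_ogeod \<eta> (L (n - 1)) (Some (-1), Some 1) \<and>
      z \<noteq> 0 \<and> maps_ogeod \<eta> (L (n + 1)) (Some (-z), Some z) \<and>
      exp (2 * \<delta>) = z)"

end

theory Submission
  imports Defs
begin

text \<open>For each side \<open>n\<close>, the definition of the half side-length \<open>\<delta>_n\<close> provides an orientation
  preserving isometry \<open>\<eta>_n\<close> taking \<open>L_n, L_(n-1), L_(n+1)\<close> to \<open>[0,\<infinity>], [-1,1], [-e^(2\<delta>_n), e^(2\<delta>_n)]\<close>.
  Then \<open>\<eta>_(n+1) = M(\<delta>_n) \<circ> \<eta>_n\<close> for the Poincar\'e extension of
  \<open>M(\<delta>) = (i/\<surd>2) [e^(-\<delta>), e^\<delta>; e^(-\<delta>), -e^\<delta>]\<close>: both sides send \<open>L_n\<close> and \<open>L_(n+1)\<close> to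
  \<open>[-1,1]\<close> and \<open>[0,\<infinity>]\<close>, and an orientation preserving isometry is determined by where it sends two
  perpendicular geodesics. Going once around the hexagon, \<open>M(\<delta>_6) \<cdots> M(\<delta>_1)\<close> acts trivially on
  \<open>H\<^sup>3\<close>, hence is \<open>\<plusminus>1\<close>. So \<open>M(\<delta>_3) M(\<delta>_2) M(\<delta>_1)\<close> is \<open>\<plusminus>\<close> the inverse of \<open>M(\<delta>_6) M(\<delta>_5) M(\<delta>_4)\<close>,
  and the entries of these triple products are combinations of exactly the four products of
  \<open>cosh\<close> and \<open>sinh\<close> in the statement.\<close>

definition zcoord :: "real^3 \<Rightarrow> complex" where
  "zcoord x = Complex (x $ 1) (x $ 2)"

lemma hpt_nth [simp]: "hpt z t $ 1 = Re z" "hpt z t $ 2 = Im z" "hpt z t $ 3 = t"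
  by (simp_all add: hpt_def)

lemma zcoord_hpt [simp]: "zcoord (hpt z t) = z"
  by (simp add: zcoord_def complex_eq_iff)

lemma hpt_zcoord: "hpt (zcoord x) (x $ 3) = x"
  by (simp add: vec_eq_iff forall_3 zcoord_def)

lemma hpt_eq_iff: "hpt z t = hpt w s \<longleftrightarrow> z = w \<and> t = s"
  by (auto simp: vec_eq_iff forall_3 complex_eq_iff)

lemma hpt_in_H3 [simp]: "hpt z t \<in> H3 \<longleftrightarrow> t > 0"
  by (simp add: H3_def)

lemma open_H3: "open H3"
  unfolding H3_def by (intro open_Collect_less continuous_intros)

lemma norm_hpt_diff_sq: "(norm (hpt z t - hpt w s))\<^sup>2 = (cmod (z - w))\<^sup>2 + (t - s)\<^sup>2"
  unfolding power2_norm_eq_inner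
  by (simp add: inner_vec_def inner_complex_def sum_3 cmod_power2 power2_eq_square algebra_simps)

lemma of_real_cmod_sq: "(of_real (cmod w))\<^sup>2 = w * cnj w"
  using complex_norm_square[of w] by simp

lemma hdist_eq_imp_ratio_eq:
  assumes "x \<in> H3" "y \<in> H3" "u \<in> H3" "v \<in> H3" "hdist x y = hdist u v"
  shows "(norm (x - y))\<^sup>2 / (x $ 3 * y $ 3) = (norm (u - v))\<^sup>2 / (u $ 3 * v $ 3)"
proof -
  have "cosh (hdist p q) = 1 + (norm (p - q))\<^sup>2 / (2 * p $ 3 * q $ 3)" if "p \<in> H3" "q \<in> H3" for p q
    unfolding hdist_def using that by (intro cosh_arcosh_real) (simp add: H3_def)
  from this[of x y] this[of u v] show ?thesis
    using assms by (auto simp: field_simps)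
qed

type_synonym cmat = "complex \<times> complex \<times> complex \<times> complex"

definition cmat_det :: "cmat \<Rightarrow> complex" where
  "cmat_det M = (case M of (a, b, c, d) \<Rightarrow> a * d - b * c)"

definition cmat_mult :: "cmat \<Rightarrow> cmat \<Rightarrow> cmat" where
  "cmat_mult M N = (case M of (a, b, c, d) \<Rightarrow> case N of (p, q, r, u) \<Rightarrow>
     (a * p + b * r, a * q + b * u, c * p + d * r, c * q + d * u))"

lemma cmat_det_mult: "cmat_det (cmat_mult M N) = cmat_det M * cmat_det N"
  by (cases M; cases N) (simp add: cmat_det_def cmat_mult_def algebra_simps)

text \<open>The Poincar\'e extension of \<open>z \<mapsto> (a z + b) / (c z + d)\<close> sends the quaternion
  \<open>w = z + t j\<close> to \<open>(a w + b) (c w + d)\<^sup>-\<^sup>1\<close>; \<open>herm a b c d z t\<close> is the complex part of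
  \<open>(a w + b) (c w + d)\<^sup>*\<close>, and \<open>herm c d c d z t = |c w + d|\<^sup>2\<close>.\<close>

definition herm :: "complex \<Rightarrow> complex \<Rightarrow> complex \<Rightarrow> complex \<Rightarrow> complex \<Rightarrow> real \<Rightarrow> complex" where
  "herm a b c d z t = (a * z + b) * cnj (c * z + d) + a * cnj c * of_real (t\<^sup>2)"

definition poincare_ext :: "cmat \<Rightarrow> real^3 \<Rightarrow> real^3" where
  "poincare_ext M x = (case M of (a, b, c, d) \<Rightarrow>
     let z = zcoord x; t = x $ 3; D = Re (herm c d c d z t)
     in hpt (herm a b c d z t / of_real D) (t / D))"

lemma herm_self: "herm c d c d z t = of_real ((cmod (c * z + d))\<^sup>2 + (cmod c)\<^sup>2 * t\<^sup>2)"
  by (simp add: herm_def of_real_cmod_sq)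

lemma poincare_ext_eq:
  "poincare_ext (a, b, c, d) x =
     (let z = zcoord x; t = x $ 3; D = (cmod (c * z + d))\<^sup>2 + (cmod c)\<^sup>2 * t\<^sup>2
      in hpt (herm a b c d z t / of_real D) (t / D))"
  by (simp add: poincare_ext_def herm_self)

lemma poincare_ext_hpt:
  "poincare_ext (a, b, c, d) (hpt z t) =
     (let D = (cmod (c * z + d))\<^sup>2 + (cmod c)\<^sup>2 * t\<^sup>2 in hpt (herm a b c d z t / of_real D) (t / D))"
  by (simp add: poincare_ext_def herm_self)

lemma poincare_ext_denom_pos:
  assumes "a * d - b * c = 1" "t > 0"
  shows "(cmod (c * z + d))\<^sup>2 + (cmod c)\<^sup>2 * t\<^sup>2 > 0"
proof (cases "c = 0")
  case True
  then show ?thesis using assms by auto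
next
  case False
  then have "(cmod c)\<^sup>2 * t\<^sup>2 > 0" using assms by simp
  then show ?thesis by (smt (verit) zero_le_power2)
qed

lemma poincare_ext_in_H3:
  assumes "cmat_det M = 1" "x \<in> H3"
  shows "poincare_ext M x \<in> H3"
proof -
  obtain a b c d where M: "M = (a, b, c, d)" by (cases M) auto
  have "(cmod (c * zcoord x + d))\<^sup>2 + (cmod c)\<^sup>2 * (x $ 3)\<^sup>2 > 0"
    using assms by (intro poincare_ext_denom_pos) (auto simp: M cmat_det_def H3_def)
  then show ?thesis
    using assms(2) by (simp add: M poincare_ext_def herm_self Let_def H3_def)
qed

lemma herm_poincare_ext:
  assumes det: "p * u - q * r = 1"
    and D: "of_real D = herm r u r u z t" "D \<noteq> 0"
  shows "herm c d c' d' (herm p q r u z t / of_real D) (t / D) =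
    herm (c * p + d * r) (c * q + d * u) (c' * p + d' * r) (c' * q + d' * u) z t / of_real D"
proof -
  define T where "T = (of_real (t\<^sup>2) :: complex)"
  define X where "X = herm p q r u z t"
  have det': "cnj p * cnj u - cnj q * cnj r = 1"
    using arg_cong[OF det, of cnj] by simp
  have DT: "of_real D = (r * z + u) * (cnj r * cnj z + cnj u) + r * cnj r * T"
    using D(1) by (simp add: herm_def T_def)
  have X: "X = (p * z + q) * (cnj r * cnj z + cnj u) + p * cnj r * T"
    and cnjX: "cnj X = (cnj p * cnj z + cnj q) * (r * z + u) + cnj p * r * T"
    by (simp_all add: X_def herm_def T_def)
  have "herm c d c' d' (X / of_real D) (t / D) =
      ((c * X + d * of_real D) * (cnj c' * cnj X + cnj d' * of_real D) + c * cnj c' * T) / (of_real D)\<^sup>2"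
    using D(2) by (simp add: herm_def T_def field_simps power2_eq_square)
  also have "(c * X + d * of_real D) * (cnj c' * cnj X + cnj d' * of_real D) + c * cnj c' * T =
      of_real D * herm (c * p + d * r) (c * q + d * u) (c' * p + d' * r) (c' * q + d' * u) z t"
    unfolding DT X cnjX using det det' by (simp add: herm_def T_def) algebra
  finally show ?thesis
    using D(2) by (simp add: X_def power2_eq_square)
qed

lemma poincare_ext_mult:
  assumes "cmat_det M = 1" "cmat_det N = 1" "x \<in> H3"
  shows "poincare_ext M (poincare_ext N x) = poincare_ext (cmat_mult M N) x"
proof -
  obtain a b c d where M: "M = (a, b, c, d)" by (cases M) auto
  obtain p q r u where N: "N = (p, q, r, u)" by (cases N) auto
  define z where "z = zcoord x"
  define t where "t = x $ 3"
  have x: "x = hpt z t" and t: "t > 0"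
    using assms(3) by (simp_all add: z_def t_def hpt_zcoord H3_def)
  have detN: "p * u - q * r = 1" and detM: "a * d - b * c = 1"
    using assms(1,2) by (simp_all add: M N cmat_det_def)
  define DN where "DN = (cmod (r * z + u))\<^sup>2 + (cmod r)\<^sup>2 * t\<^sup>2"
  have DN: "DN > 0" "of_real DN = herm r u r u z t"
    using poincare_ext_denom_pos[OF detN t] by (simp_all add: DN_def herm_self)
  note herm_N = herm_poincare_ext[OF detN DN(2)]
  define DM where "DM = (cmod (c * (herm p q r u z t / of_real DN) + d))\<^sup>2 + (cmod c)\<^sup>2 * (t / DN)\<^sup>2"
  define DMN where "DMN = (cmod ((c * p + d * r) * z + (c * q + d * u)))\<^sup>2 + (cmod (c * p + d * r))\<^sup>2 * t\<^sup>2"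
  have "(of_real DM :: complex) = of_real DMN / of_real DN"
    using herm_N[of c d c d] DN(1) by (simp add: DM_def DMN_def herm_self)
  then have DMN: "DMN = DM * DN"
    using DN(1) by (simp add: field_simps flip: of_real_mult)
  have "poincare_ext M (poincare_ext N x) = hpt (herm a b c d (herm p q r u z t / of_real DN) (t / DN) / of_real DM) (t / DN / DM)"
    by (simp add: x M N poincare_ext_hpt DN_def DM_def Let_def)
  also have "\<dots> = hpt (herm (a * p + b * r) (a * q + b * u) (c * p + d * r) (c * q + d * u) z t / of_real DMN)
      (t / DMN)"
    using herm_N[of a b c d] DN(1) by (simp add: DMN hpt_eq_iff divide_divide_eq_left ac_simps)
  also have "\<dots> = poincare_ext (cmat_mult M N) x"
    by (simp add: x M N cmat_mult_def poincare_ext_hpt DMN_def Let_def)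
  finally show ?thesis .
qed

lemma poincare_ext_eq_id_imp:
  assumes "cmat_det M = 1" "\<forall>x\<in>H3. poincare_ext M x = x"
  shows "M = (1, 0, 0, 1) \<or> M = (-1, 0, 0, -1)"
proof -
  obtain a b c d where M: "M = (a, b, c, d)" by (cases M) auto
  have det: "a * d - b * c = 1"
    using assms by (simp add: M cmat_det_def)
  have fix1: "poincare_ext M (hpt 0 1) = hpt 0 1" and fix2: "poincare_ext M (hpt 0 2) = hpt 0 2"
    and fix3: "poincare_ext M (hpt 1 1) = hpt 1 1"
    using assms(2) by auto
  define D1 where "D1 = (cmod d)\<^sup>2 + (cmod c)\<^sup>2"
  define D2 where "D2 = (cmod d)\<^sup>2 + (cmod c)\<^sup>2 * 4"
  have "D1 > 0" using poincare_ext_denom_pos[OF det, of 1 0] by (simp add: D1_def)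
  have "hpt ((b * cnj d + a * cnj c) / of_real D1) (1 / D1) = hpt 0 1"
    using fix1 by (simp add: M poincare_ext_hpt herm_def Let_def D1_def)
  then have "D1 = 1" and b_c: "b * cnj d + a * cnj c = 0"
    using \<open>D1 > 0\<close> by (auto simp: hpt_eq_iff)
  moreover have "2 / D2 = 2"
    using fix2 by (simp add: M poincare_ext_hpt Let_def hpt_eq_iff D2_def)
  then have "D2 = 1"
    by (cases "D2 = 0") (auto simp: divide_eq_eq)
  ultimately have "(cmod c)\<^sup>2 = 0"
    unfolding D1_def D2_def by linarith
  then have "c = 0" by simp
  then have "(cmod d)\<^sup>2 = 1"
    using \<open>D1 = 1\<close> by (simp add: D1_def)
  then have dd: "d * cnj d = 1"
    using of_real_cmod_sq[of d] by (metis of_real_1 of_real_power)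
  have "b = 0" using b_c \<open>c = 0\<close> dd by auto
  have "poincare_ext M (hpt 1 1) = hpt (a * cnj d) 1"
    using \<open>c = 0\<close> \<open>b = 0\<close> \<open>(cmod d)\<^sup>2 = 1\<close> by (simp add: M poincare_ext_hpt herm_def Let_def)
  with fix3 have "a * cnj d = 1" by (simp add: hpt_eq_iff)
  moreover have "a * d = 1" using det \<open>c = 0\<close> by simp
  ultimately have "cnj d = d" by (metis mult_cancel_left mult_zero_left zero_neq_one)
  then obtain s where s: "d = of_real s" by (metis Reals_cases Reals_cnj_iff)
  then have "s = 1 \<or> s = -1"
    using dd by (metis complex_cnj_complex_of_real of_real_eq_1_iff of_real_mult square_eq_1_iff)
  then show ?thesis
    using s \<open>a * d = 1\<close> \<open>b = 0\<close> \<open>c = 0\<close> M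
    by (auto simp: field_simps) (metis add.inverse_inverse mult_minus1 mult_minus_right mult.commute)+
qed

text \<open>\<open>orient_isom\<close> without surjectivity, which the argument never uses; this spares proving that
  the maps \<open>poincare_ext M\<close> are onto.\<close>

definition pos_isometry :: "(real^3 \<Rightarrow> real^3) \<Rightarrow> bool" where
  "pos_isometry f \<longleftrightarrow> (\<forall>x\<in>H3. f x \<in> H3) \<and> (\<forall>x\<in>H3. \<forall>y\<in>H3. hdist (f x) (f y) = hdist x y) \<and>
     (\<forall>x\<in>H3. \<exists>D. (f has_derivative D) (at x) \<and> det (matrix D) > 0)"

lemma orient_isom_imp_pos_isometry: "orient_isom f \<Longrightarrow> pos_isometry f"
  unfolding orient_isom_def pos_isometry_def bij_betw_def by auto

lemma pos_isometry_comp: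
  assumes "pos_isometry f" "pos_isometry g"
  shows "pos_isometry (f \<circ> g)"
  unfolding pos_isometry_def
proof (intro conjI ballI)
  fix x y assume x: "x \<in> H3" and y: "y \<in> H3"
  show "(f \<circ> g) x \<in> H3" and "hdist ((f \<circ> g) x) ((f \<circ> g) y) = hdist x y"
    using assms x y by (simp_all add: pos_isometry_def)
next
  fix x assume x: "x \<in> H3"
  obtain Dg where Dg: "(g has_derivative Dg) (at x)" "det (matrix Dg) > 0"
    using assms(2) x by (auto simp: pos_isometry_def)
  have "g x \<in> H3" using assms(2) x by (simp add: pos_isometry_def)
  then obtain Df where Df: "(f has_derivative Df) (at (g x))" "det (matrix Df) > 0"
    using assms(1) by (auto simp: pos_isometry_def)
  have "((f \<circ> g) has_derivative (Df \<circ> Dg)) (at x)"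
    using has_derivative_compose[OF Dg(1) Df(1)] by (simp add: o_def)
  moreover have "matrix (Df \<circ> Dg) = matrix Df ** matrix Dg"
    using Dg(1) Df(1) by (intro matrix_compose) (auto dest: has_derivative_linear)
  ultimately show "\<exists>D. ((f \<circ> g) has_derivative D) (at x) \<and> det (matrix D) > 0"
    using Df Dg by (auto simp: det_mul)
qed

lemma pos_isometry_cong:
  assumes "pos_isometry f" "\<And>x. x \<in> H3 \<Longrightarrow> f x = g x"
  shows "pos_isometry g"
  unfolding pos_isometry_def
proof (intro conjI ballI)
  fix x y assume x: "x \<in> H3" and y: "y \<in> H3"
  show "g x \<in> H3" and "hdist (g x) (g y) = hdist x y"
    using assms x y by (auto simp: pos_isometry_def)
next
  fix x assume x: "x \<in> H3"
  obtain D where D: "(f has_derivative D) (at x)" "det (matrix D) > 0"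
    using assms(1) x by (auto simp: pos_isometry_def)
  have "(g has_derivative D) (at x)"
    by (rule has_derivative_transform_within_open[OF D(1) open_H3 x]) (use assms(2) in auto)
  with D show "\<exists>D. (g has_derivative D) (at x) \<and> det (matrix D) > 0" by auto
qed

lemma pos_isometry_linear:
  assumes "linear f" "det (matrix f) > 0" "\<And>x. x \<in> H3 \<Longrightarrow> f x \<in> H3"
    and "\<And>x y. x \<in> H3 \<Longrightarrow> y \<in> H3 \<Longrightarrow> hdist (f x) (f y) = hdist x y"
  shows "pos_isometry f"
  using assms linear_imp_has_derivative[OF assms(1)]
  by (auto simp: pos_isometry_def intro!: exI[of _ f])

lemma axis_3_nth:
  "axis (1::3) (1::real) $ 1 = 1" "axis (1::3) (1::real) $ 2 = 0" "axis (1::3) (1::real) $ 3 = 0"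
  "axis (2::3) (1::real) $ 1 = 0" "axis (2::3) (1::real) $ 2 = 1" "axis (2::3) (1::real) $ 3 = 0"
  "axis (3::3) (1::real) $ 1 = 0" "axis (3::3) (1::real) $ 2 = 0" "axis (3::3) (1::real) $ 3 = 1"
  by (simp_all add: axis_def)

definition dilation :: "complex \<Rightarrow> real^3 \<Rightarrow> real^3" where
  "dilation l x = hpt (l * zcoord x) (cmod l * x $ 3)"

lemma pos_isometry_dilation:
  assumes "l \<noteq> 0"
  shows "pos_isometry (dilation l)"
proof (rule pos_isometry_linear)
  show "linear (dilation l)"
    by (rule linearI) (simp_all add: dilation_def vec_eq_iff forall_3 zcoord_def algebra_simps)
  have "det (matrix (dilation l)) = cmod l * ((Re l)\<^sup>2 + (Im l)\<^sup>2)"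
    by (simp add: det_3 matrix_def dilation_def zcoord_def axis_3_nth power2_eq_square algebra_simps)
  then show "det (matrix (dilation l)) > 0"
    using assms by (simp add: cmod_power2[symmetric])
  fix x y assume x: "x \<in> H3" and y: "y \<in> H3"
  show "dilation l x \<in> H3"
    using x assms by (simp add: dilation_def H3_def)
  have "(norm (dilation l x - dilation l y))\<^sup>2 = (cmod (l * zcoord x - l * zcoord y))\<^sup>2 + (cmod l * x $ 3 - cmod l * y $ 3)\<^sup>2"
    unfolding dilation_def by (rule norm_hpt_diff_sq)
  also have "\<dots> = (cmod l)\<^sup>2 * ((cmod (zcoord x - zcoord y))\<^sup>2 + (x $ 3 - y $ 3)\<^sup>2)"
    unfolding right_diff_distrib[symmetric] norm_mult power_mult_distrib by (simp add: distrib_left)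
  also have "(cmod (zcoord x - zcoord y))\<^sup>2 + (x $ 3 - y $ 3)\<^sup>2 = (norm (x - y))\<^sup>2"
    using norm_hpt_diff_sq[of "zcoord x" "x $ 3" "zcoord y" "y $ 3"] by (simp add: hpt_zcoord)
  finally have "(norm (dilation l x - dilation l y))\<^sup>2 = (cmod l)\<^sup>2 * (norm (x - y))\<^sup>2" .
  then have "(norm (dilation l x - dilation l y))\<^sup>2 / (2 * dilation l x $ 3 * dilation l y $ 3) =
      (norm (x - y))\<^sup>2 / (2 * x $ 3 * y $ 3)"
    using assms by (simp add: dilation_def power2_eq_square)
  then show "hdist (dilation l x) (dilation l y) = hdist x y"
    by (simp add: hdist_def)
qed

definition horiz_translation :: "complex \<Rightarrow> real^3 \<Rightarrow> real^3" where
  "horiz_translation b x = x + hpt b 0"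

lemma pos_isometry_horiz_translation: "pos_isometry (horiz_translation b)"
  unfolding pos_isometry_def
proof (intro conjI ballI)
  fix x y assume x: "x \<in> H3"
  show "horiz_translation b x \<in> H3" and "hdist (horiz_translation b x) (horiz_translation b y) = hdist x y"
    using x by (simp_all add: horiz_translation_def H3_def hdist_def)
  have "(horiz_translation b has_derivative id) (at x)"
    unfolding horiz_translation_def id_def by (auto intro!: derivative_eq_intros)
  then show "\<exists>D. (horiz_translation b has_derivative D) (at x) \<and> det (matrix D) > 0"
    by (auto simp: matrix_id_mat_1)
qed

definition refl_Im :: "real^3 \<Rightarrow> real^3" where
  "refl_Im x = vector [x $ 1, - x $ 2, x $ 3]"

lemma linear_refl_Im: "linear refl_Im"
  by (rule linearI) (simp_all add: refl_Im_def vec_eq_iff forall_3)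

lemma det_refl_Im: "det (matrix refl_Im) = -1"
  by (simp add: det_3 matrix_def refl_Im_def axis_3_nth)

text \<open>The Poincar\'e extension of \<open>z \<mapsto> 1 / z\<close>: inversion in the unit sphere composed with
  \<open>refl_Im\<close>.\<close>

definition inversion :: "real^3 \<Rightarrow> real^3" where
  "inversion x = inverse (x \<bullet> x) *\<^sub>R refl_Im x"

definition inversion_deriv :: "real^3 \<Rightarrow> real^3 \<Rightarrow> real^3" where
  "inversion_deriv x h = inverse (x \<bullet> x) *\<^sub>R refl_Im h
     + (- (inverse (x \<bullet> x) * (x \<bullet> h + h \<bullet> x) * inverse (x \<bullet> x))) *\<^sub>R refl_Im x"

lemma inner_self_pos_H3: "x \<in> H3 \<Longrightarrow> x \<bullet> x > 0"
  by (auto simp: H3_def)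

lemma hdist_inversion:
  assumes "x \<in> H3" "y \<in> H3"
  shows "hdist (inversion x) (inversion y) = hdist x y"
proof -
  define a b c where "a = x \<bullet> x" and "b = y \<bullet> y" and "c = x \<bullet> y"
  have a: "a > 0" and b: "b > 0"
    using inner_self_pos_H3 assms by (auto simp: a_def b_def)
  have refl: "refl_Im u \<bullet> refl_Im v = u \<bullet> v" for u v
    by (simp add: refl_Im_def inner_vec_def sum_3)
  have "(norm (inversion x - inversion y))\<^sup>2 = inverse a * inverse a * a - 2 * inverse a * inverse b * c + inverse b * inverse b * b"
    by (simp add: power2_norm_eq_inner inversion_def inner_diff_left inner_diff_right refl
        a_def b_def c_def inner_commute algebra_simps)
  also have "\<dots> = (norm (x - y))\<^sup>2 / (a * b)"
    using a b by (simp add: power2_norm_eq_inner inner_diff_left inner_diff_right a_def b_def c_def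
        inner_commute field_simps)
  finally have N: "(norm (inversion x - inversion y))\<^sup>2 = (norm (x - y))\<^sup>2 / (a * b)" .
  have h3: "inversion x $ 3 = x $ 3 / a" "inversion y $ 3 = y $ 3 / b"
    by (simp_all add: inversion_def refl_Im_def a_def b_def divide_inverse mult.commute)
  have "(norm (inversion x - inversion y))\<^sup>2 / (2 * inversion x $ 3 * inversion y $ 3) =
      (norm (x - y))\<^sup>2 / (2 * x $ 3 * y $ 3)"
    unfolding N h3 using a b by (simp add: field_simps)
  then show ?thesis by (simp add: hdist_def)
qed

lemma inversion_has_derivative:
  assumes "x \<bullet> x \<noteq> 0"
  shows "(inversion has_derivative inversion_deriv x) (at x)"
proof -
  have "((\<lambda>y. y \<bullet> y) has_derivative (\<lambda>h. x \<bullet> h + h \<bullet> x)) (at x)"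
    by (rule has_derivative_inner[OF has_derivative_ident has_derivative_ident])
  from has_derivative_scaleR[OF Deriv.has_derivative_inverse[OF assms this]
      linear_imp_has_derivative[OF linear_refl_Im]]
  show ?thesis
    unfolding inversion_def inversion_deriv_def by simp
qed

lemma det_inversion_deriv:
  assumes "x \<bullet> x \<noteq> 0"
  shows "det (matrix (inversion_deriv x)) = inverse (x \<bullet> x) ^ 3"
proof -
  define a b c where "a = x $ 1" and "b = x $ 2" and "c = x $ 3"
  have xx: "x \<bullet> x = a * a + b * b + c * c"
    by (simp add: inner_vec_def sum_3 a_def b_def c_def)
  define k where "k = inverse (a * a + b * b + c * c)"
  have k: "k * (a * a + b * b + c * c) = 1"
    using assms by (simp add: k_def xx)
  have inner_axis_x: "\<And>j. x \<bullet> axis j 1 = x $ j" "\<And>j. axis j 1 \<bullet> x = x $ j"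
    by (simp_all add: inner_axis inner_commute[of "axis _ _"])
  show ?thesis
    unfolding xx k_def[symmetric]
    by (simp add: det_3 matrix_def inversion_deriv_def refl_Im_def axis_3_nth xx k_def[symmetric]
        inner_axis_x flip: a_def b_def c_def) (use k in algebra)
qed

lemma pos_isometry_inversion: "pos_isometry inversion"
  unfolding pos_isometry_def
proof (intro conjI ballI)
  fix x y assume x: "x \<in> H3" and y: "y \<in> H3"
  show "inversion x \<in> H3"
    using x inner_self_pos_H3[OF x] by (simp add: inversion_def refl_Im_def H3_def)
  show "hdist (inversion x) (inversion y) = hdist x y"
    by (rule hdist_inversion[OF x y])
next
  fix x assume "x \<in> H3"
  then have "x \<bullet> x > 0" by (rule inner_self_pos_H3)
  then show "\<exists>D. (inversion has_derivative D) (at x) \<and> det (matrix D) > 0"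
    using inversion_has_derivative det_inversion_deriv by force
qed

lemma poincare_ext_translation: "poincare_ext (1, b, 0, 1) x = horiz_translation b x"
  by (simp add: poincare_ext_eq herm_def horiz_translation_def Let_def vec_eq_iff forall_3 zcoord_def)

lemma poincare_ext_diag:
  assumes "m \<noteq> 0"
  shows "poincare_ext (m, 0, 0, inverse m) x = dilation (m\<^sup>2) x"
proof -
  have raw: "poincare_ext (m, 0, 0, inverse m) x = hpt (m * zcoord x * cnj (inverse m) / of_real ((cmod (inverse m))\<^sup>2))
      (x $ 3 / (cmod (inverse m))\<^sup>2)"
    by (simp add: poincare_ext_eq herm_def Let_def)
  have "cnj (inverse m) / of_real ((cmod (inverse m))\<^sup>2) = m"
    using assms complex_norm_square[of "inverse m"] by (simp add: field_simps)
  then have "m * zcoord x * cnj (inverse m) / of_real ((cmod (inverse m))\<^sup>2) = m\<^sup>2 * zcoord x"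
    by (metis (no_types, lifting) mult.assoc mult.commute power2_eq_square times_divide_eq_right)
  moreover have "x $ 3 / (cmod (inverse m))\<^sup>2 = cmod (m\<^sup>2) * x $ 3"
    using assms by (simp add: norm_inverse norm_power power_inverse divide_inverse)
  ultimately show ?thesis
    unfolding raw dilation_def by simp
qed

lemma poincare_ext_antidiag:
  assumes "x \<bullet> x \<noteq> 0"
  shows "poincare_ext (0, \<i>, \<i>, 0) x = inversion x"
proof -
  have xx: "x \<bullet> x = (cmod (zcoord x))\<^sup>2 + (x $ 3)\<^sup>2"
    by (simp add: inner_vec_def sum_3 zcoord_def cmod_power2) (simp add: power2_eq_square)
  have "poincare_ext (0, \<i>, \<i>, 0) x = hpt (cnj (zcoord x) / of_real (x \<bullet> x)) (x $ 3 / (x \<bullet> x))"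
    unfolding xx by (simp add: poincare_ext_eq herm_def Let_def norm_mult)
  also have "\<dots> = inversion x"
    using assms by (simp add: inversion_def refl_Im_def vec_eq_iff forall_3 zcoord_def
        divide_inverse mult.commute hpt_def power2_eq_square)
  finally show ?thesis .
qed

lemma pos_isometry_poincare_ext_mult:
  assumes "cmat_det M = 1" "cmat_det N = 1" "pos_isometry (poincare_ext M)" "pos_isometry (poincare_ext N)"
  shows "pos_isometry (poincare_ext (cmat_mult M N))"
  by (rule pos_isometry_cong[OF pos_isometry_comp[OF assms(3,4)]]) (simp add: poincare_ext_mult assms)

text \<open>Every matrix of determinant 1 is a product of translations, diagonal matrices and
  \<open>(0, \<i>, \<i>, 0)\<close>, whose extensions are the isometries above.\<close>

lemma pos_isometry_poincare_ext:
  assumes "cmat_det M = 1"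
  shows "pos_isometry (poincare_ext M)"
proof -
  have trans: "pos_isometry (poincare_ext (1, b, 0, 1))" for b
    by (rule pos_isometry_cong[OF pos_isometry_horiz_translation]) (simp add: poincare_ext_translation)
  have diag: "pos_isometry (poincare_ext (m, 0, 0, inverse m))" if "m \<noteq> 0" for m
    by (rule pos_isometry_cong[OF pos_isometry_dilation, of "m\<^sup>2"]) (simp_all add: that poincare_ext_diag)
  have antidiag: "pos_isometry (poincare_ext (0, \<i>, \<i>, 0))"
    by (rule pos_isometry_cong[OF pos_isometry_inversion])
      (metis inner_self_pos_H3 less_irrefl poincare_ext_antidiag)
  obtain a b c d where M: "M = (a, b, c, d)" and det: "a * d - b * c = 1"
    using assms by (cases M) (auto simp: cmat_det_def)
  show ?thesis
  proof (cases "c = 0")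
    case True
    then have "a * d = 1" using det by simp
    then have "a \<noteq> 0" "d = inverse a" using inverse_unique[of a d] by auto
    then have "M = cmat_mult (a, 0, 0, inverse a) (1, b / a, 0, 1)"
      using True by (simp add: M cmat_mult_def)
    then show ?thesis
      using \<open>a \<noteq> 0\<close> by (simp add: pos_isometry_poincare_ext_mult trans diag cmat_det_def)
  next
    case False
    define J where "J = cmat_mult (\<i> / c, 0, 0, inverse (\<i> / c)) (0, \<i>, \<i>, 0)"
    have M': "M = cmat_mult (1, a / c, 0, 1) (cmat_mult J (1, d / c, 0, 1))"
      using False det by (simp add: M J_def cmat_mult_def field_simps)
    have det_diag: "cmat_det (\<i> / c, 0, 0, inverse (\<i> / c)) = 1"
      using False by (simp add: cmat_det_def)
    have "cmat_det J = 1"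
      unfolding J_def cmat_det_mult det_diag by (simp add: cmat_det_def)
    moreover have "pos_isometry (poincare_ext J)"
      unfolding J_def using False det_diag
      by (intro pos_isometry_poincare_ext_mult diag antidiag) (simp_all add: cmat_det_def)
    ultimately show ?thesis
      unfolding M' by (intro pos_isometry_poincare_ext_mult trans) (simp_all add: cmat_det_mult, simp_all add: cmat_det_def)
  qed
qed

lemma geod_param_axis: "geod_param (Some 0, None) s = hpt 0 (exp s)"
  by (simp add: geod_param_def)

lemma geod_param_sym:
  assumes "z \<noteq> 0"
  shows "geod_param (Some (- z), Some z) s = hpt (of_real (tanh s) * z) (cmod z / cosh s)"
proof -
  have "cmod (z - - z) = 2 * cmod z" by (simp add: norm_mult flip: mult_2)
  moreover have "of_real (cmod z * tanh s) * ((z - - z) / of_real (2 * cmod z)) = of_real (tanh s) * z"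
    using assms by (simp add: field_simps)
  ultimately show ?thesis
    using assms by (simp add: geod_param_def Let_def)
qed

lemma geod_param_unit: "geod_param (Some (-1), Some 1) s = hpt (of_real (tanh s)) (1 / cosh s)"
  using geod_param_sym[of 1 s] by simp

lemma geod_param_unit_exp:
  "geod_param (Some (-1), Some 1) s =
     hpt (of_real (((exp s)\<^sup>2 - 1) / ((exp s)\<^sup>2 + 1))) (2 * exp s / ((exp s)\<^sup>2 + 1))"
proof -
  define E where "E = exp s"
  have E: "E > 0" by (simp add: E_def)
  have "tanh s = (E - inverse E) / (E + inverse E)" "cosh s = (E + inverse E) / 2"
    by (simp_all add: tanh_altdef cosh_def exp_minus E_def)
  moreover have "E + inverse E = (E\<^sup>2 + 1) / E" "E - inverse E = (E\<^sup>2 - 1) / E"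
    using E by (simp_all add: field_simps power2_eq_square)
  ultimately show ?thesis
    using E by (simp add: geod_param_unit E_def[symmetric] ac_simps)
qed

lemma geod_param_in_H3: "valid_ogeod L \<Longrightarrow> geod_param L s \<in> H3"
proof (cases L)
  case (Pair u v)
  assume "valid_ogeod L"
  then have uv: "u \<noteq> v" by (simp add: Pair valid_ogeod_def)
  show ?thesis
  proof (cases u; cases v)
    fix a b assume "u = Some a" "v = Some b"
    then have "a \<noteq> b" using uv by simp
    then have "cmod (b - a) / 2 / cosh s > 0" by (simp add: cosh_real_pos)
    then show ?thesis using \<open>u = Some a\<close> \<open>v = Some b\<close> by (simp add: Pair geod_param_def Let_def)
  qed (use uv in \<open>auto simp: Pair geod_param_def\<close>)
qed

lemma geod_param_axis_eq_unit_iff: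
  "geod_param (Some 0, None) a = geod_param (Some (-1), Some 1) b \<longleftrightarrow> a = 0 \<and> b = 0"
  by (auto simp: geod_param_axis geod_param_unit hpt_eq_iff)

definition swap_scale :: complex where
  "swap_scale = \<i> / of_real (sqrt 2)"

text \<open>The Poincar\'e extension of \<open>z \<mapsto> (z + 1) / (z - 1)\<close>, normalised to determinant 1.\<close>

definition swap_mat :: cmat where
  "swap_mat = (swap_scale, swap_scale, swap_scale, - swap_scale)"

lemma swap_scale_sq: "swap_scale * swap_scale = - 1 / 2"
  by (simp add: swap_scale_def field_simps flip: of_real_mult)

lemma cmat_det_swap_mat: "cmat_det swap_mat = 1"
  by (simp add: swap_mat_def cmat_det_def swap_scale_sq)

lemma poincare_ext_swap_hpt:
  "poincare_ext swap_mat (hpt z t) =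
     hpt (((z + 1) * cnj (z - 1) + of_real (t\<^sup>2)) / of_real ((cmod (z - 1))\<^sup>2 + t\<^sup>2))
       (2 * t / ((cmod (z - 1))\<^sup>2 + t\<^sup>2))"
proof -
  have q: "swap_scale * cnj swap_scale = 1 / 2" "(cmod swap_scale)\<^sup>2 = 1 / 2"
    by (simp_all add: swap_scale_def field_simps norm_divide flip: of_real_mult)
  have "swap_scale * z + - swap_scale = swap_scale * (z - 1)"
    by (simp add: algebra_simps)
  then have D: "(cmod (swap_scale * z + - swap_scale))\<^sup>2 + (cmod swap_scale)\<^sup>2 * t\<^sup>2 = ((cmod (z - 1))\<^sup>2 + t\<^sup>2) / 2"
    by (simp add: norm_mult power_mult_distrib q)
  have "herm swap_scale swap_scale swap_scale (- swap_scale) z t =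
      (swap_scale * cnj swap_scale) * ((z + 1) * cnj (z - 1) + of_real (t\<^sup>2))"
    by (simp add: herm_def algebra_simps)
  then have H: "herm swap_scale swap_scale swap_scale (- swap_scale) z t = ((z + 1) * cnj (z - 1) + of_real (t\<^sup>2)) / 2"
    by (simp add: q)
  have half: "A / 2 / of_real (B / 2) = A / of_real B" "t / (B / 2) = 2 * t / B"
    for A :: complex and B :: real
    by (cases "B = 0"; simp add: field_simps)+
  show ?thesis
    unfolding swap_mat_def poincare_ext_hpt Let_def D H half ..
qed

lemma poincare_ext_swap_axis:
  "poincare_ext swap_mat (geod_param (Some 0, None) s) = geod_param (Some (-1), Some 1) s"
  unfolding geod_param_axis geod_param_unit_exp poincare_ext_swap_hpt
  by (simp add: field_simps)

lemma poincare_ext_swap_unit: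
  "poincare_ext swap_mat (geod_param (Some (-1), Some 1) s) = geod_param (Some 0, None) s"
proof -
  define E where "E = exp s"
  define G where "G = E\<^sup>2 + 1"
  have G: "G > 0" by (simp add: G_def add_nonneg_pos)
  define a b where "a = (E\<^sup>2 - 1) / G" and "b = 2 * E / G"
  have "a * a - 1 + b\<^sup>2 = ((E\<^sup>2 - 1) * (E\<^sup>2 - 1) - G * G + 2 * E * (2 * E)) / G\<^sup>2"
    using G by (simp add: a_def b_def field_simps power2_eq_square)
  also have "(E\<^sup>2 - 1) * (E\<^sup>2 - 1) - G * G + 2 * E * (2 * E) = 0"
    unfolding G_def by algebra
  finally have "a * a - 1 + b\<^sup>2 = 0" by simp
  have "(a - 1)\<^sup>2 + b\<^sup>2 = ((E\<^sup>2 - 1 - G) * (E\<^sup>2 - 1 - G) + 2 * E * (2 * E)) / G\<^sup>2"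
    using G by (simp add: a_def b_def field_simps power2_eq_square)
  also have "(E\<^sup>2 - 1 - G) * (E\<^sup>2 - 1 - G) + 2 * E * (2 * E) = 4 * G"
    unfolding G_def by algebra
  finally have "(a - 1)\<^sup>2 + b\<^sup>2 = 4 / G"
    using G by (simp add: power2_eq_square)
  moreover note \<open>a * a - 1 + b\<^sup>2 = 0\<close>
  moreover have "2 * b / (4 / G) = E"
    using G by (simp add: b_def field_simps)
  moreover have "(of_real a + 1) * cnj (of_real a - 1) + of_real (b\<^sup>2) = (of_real (a * a - 1 + b\<^sup>2) :: complex)"
    by (simp add: algebra_simps)
  moreover have "cmod (of_real a - 1) = \<bar>a - 1\<bar>"
    by (metis norm_of_real of_real_1 of_real_diff)
  ultimately show ?thesis
    unfolding geod_param_unit_exp geod_param_axis poincare_ext_swap_hpt E_def[symmetric]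
      G_def[symmetric] a_def[symmetric] b_def[symmetric] by (simp add: power2_abs)
qed

definition shift_mat :: "complex \<Rightarrow> cmat" where
  "shift_mat d = (exp (- d), 0, 0, exp d)"

lemma cmat_det_shift_mat: "cmat_det (shift_mat d) = 1"
  by (simp add: shift_mat_def cmat_det_def exp_minus)

lemma poincare_ext_shift_mat: "poincare_ext (shift_mat d) x = dilation (exp (- 2 * d)) x"
proof -
  have "(exp (- d))\<^sup>2 = exp (- 2 * d)"
    by (simp add: power2_eq_square exp_add[symmetric])
  then show ?thesis
    using poincare_ext_diag[of "exp (- d)" x] by (simp add: shift_mat_def exp_minus)
qed

lemma poincare_ext_shift_axis:
  "poincare_ext (shift_mat d) (geod_param (Some 0, None) s) = geod_param (Some 0, None) (s - 2 * Re d)"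
proof -
  have "cmod (exp (- 2 * d)) = exp (- (2 * Re d))"
    by (simp add: norm_exp_eq_Re)
  then show ?thesis
    unfolding poincare_ext_shift_mat geod_param_axis dilation_def
    by (simp add: exp_diff exp_minus divide_inverse mult.commute)
qed

lemma poincare_ext_shift_sym:
  "poincare_ext (shift_mat d) (geod_param (Some (- exp (2 * d)), Some (exp (2 * d))) s) =
     geod_param (Some (-1), Some 1) s"
proof -
  have e: "exp (- 2 * d) * exp (2 * d) = 1" by (simp add: exp_add[symmetric])
  then have "cmod (exp (- 2 * d)) * cmod (exp (2 * d)) = 1" by (metis norm_mult norm_one)
  then have cancel: "exp (- 2 * d) * (of_real (tanh s) * exp (2 * d)) = of_real (tanh s)"
    "cmod (exp (- 2 * d)) * (cmod (exp (2 * d)) / cosh s) = 1 / cosh s"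
    using e by (metis mult.left_commute mult_1_right, metis times_divide_eq_right mult.assoc)
  show ?thesis
    unfolding poincare_ext_shift_mat geod_param_sym[OF exp_not_eq_zero] geod_param_unit dilation_def
      zcoord_hpt hpt_nth cancel ..
qed

text \<open>The transition between the frames of two consecutive sides, see \<open>adapted_frame_step\<close>.\<close>

definition side_mat :: "complex \<Rightarrow> cmat" where
  "side_mat d = cmat_mult swap_mat (shift_mat d)"

lemma side_mat_eq: "side_mat d = (swap_scale * exp (- d), swap_scale * exp d, swap_scale * exp (- d), - swap_scale * exp d)"
  by (simp add: side_mat_def swap_mat_def shift_mat_def cmat_mult_def)

lemma cmat_det_side_mat: "cmat_det (side_mat d) = 1"
  by (simp add: side_mat_def cmat_det_mult cmat_det_swap_mat cmat_det_shift_mat)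

lemma poincare_ext_side_mat: "x \<in> H3 \<Longrightarrow> poincare_ext (side_mat d) x = poincare_ext swap_mat (poincare_ext (shift_mat d) x)"
  by (simp add: side_mat_def poincare_ext_mult cmat_det_swap_mat cmat_det_shift_mat)

lemma poincare_ext_side_axis:
  "poincare_ext (side_mat d) (geod_param (Some 0, None) s) = geod_param (Some (-1), Some 1) (s - 2 * Re d)"
  by (simp add: poincare_ext_side_mat[OF geod_param_in_H3] valid_ogeod_def poincare_ext_shift_axis
      poincare_ext_swap_axis)

lemma poincare_ext_side_sym:
  "poincare_ext (side_mat d) (geod_param (Some (- exp (2 * d)), Some (exp (2 * d))) s) = geod_param (Some 0, None) s"
  by (simp add: poincare_ext_side_mat[OF geod_param_in_H3] valid_ogeod_def poincare_ext_shift_sym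
      poincare_ext_swap_unit)

lemma eq_or_refl_Im_if_same_hdist:
  assumes u: "u \<in> H3" and v: "v \<in> H3" and A: "A \<noteq> 0" "A\<^sup>2 + B\<^sup>2 = 1" and "B > 0"
    and same: "\<And>p. p \<in> {hpt 0 1, hpt 0 2, hpt (of_real A) B} \<Longrightarrow> hdist u p = hdist v p"
  shows "v = u \<or> v = refl_Im u"
proof -
  have ratio: "(norm (u - p))\<^sup>2 * v $ 3 = (norm (v - p))\<^sup>2 * u $ 3"
    if "p \<in> {hpt 0 1, hpt 0 2, hpt (of_real A) B}" for p
  proof -
    have "p \<in> H3" "p $ 3 > 0" using that \<open>B > 0\<close> by (auto simp: H3_def)
    with hdist_eq_imp_ratio_eq[OF u _ v _ same[OF that]] u v show ?thesis
      by (auto simp: H3_def field_simps)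
  qed
  define u1 u2 t v1 v2 s where "u1 = u $ 1" "u2 = u $ 2" "t = u $ 3" "v1 = v $ 1" "v2 = v $ 2" "s = v $ 3"
  note coords = this
  have sq: "(norm (x - hpt w h))\<^sup>2 = (x $ 1 - Re w)\<^sup>2 + (x $ 2 - Im w)\<^sup>2 + (x $ 3 - h)\<^sup>2" for x w h
    unfolding power2_norm_eq_inner by (simp add: inner_vec_def sum_3 power2_eq_square)
  have t: "t > 0" using u by (simp add: coords H3_def)
  have f1: "(u1\<^sup>2 + u2\<^sup>2 + (t - 1)\<^sup>2) * s = (v1\<^sup>2 + v2\<^sup>2 + (s - 1)\<^sup>2) * t"
    and f2: "(u1\<^sup>2 + u2\<^sup>2 + (t - 2)\<^sup>2) * s = (v1\<^sup>2 + v2\<^sup>2 + (s - 2)\<^sup>2) * t"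
    and f3: "((u1 - A)\<^sup>2 + u2\<^sup>2 + (t - B)\<^sup>2) * s = ((v1 - A)\<^sup>2 + v2\<^sup>2 + (s - B)\<^sup>2) * t"
    using ratio[of "hpt 0 1"] ratio[of "hpt 0 2"] ratio[of "hpt (of_real A) B"]
    by (simp_all add: sq flip: coords)
  have ts: "t = s" using f1 f2 by algebra
  have "(u1\<^sup>2 + u2\<^sup>2 + t\<^sup>2 + 1) * t = (v1\<^sup>2 + v2\<^sup>2 + t\<^sup>2 + 1) * t"
    using f1 unfolding ts by algebra
  then have N: "u1\<^sup>2 + u2\<^sup>2 = v1\<^sup>2 + v2\<^sup>2" using t by simp
  have "A * u1 * t = A * v1 * t" using f3 N A(2) unfolding ts by algebra
  then have "u1 = v1" using t A(1) by simp
  then have "v2 = u2 \<or> v2 = - u2" using N by (auto simp: power2_eq_iff)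
  then show ?thesis
    using \<open>u1 = v1\<close> ts by (auto simp: vec_eq_iff forall_3 coords refl_Im_def)
qed

text \<open>Where \<open>f\<close> and \<open>g\<close> differ, continuity makes \<open>g = refl_Im \<circ> f\<close> near that point, and then
  the Jacobians of \<open>f\<close> and \<open>g\<close> have opposite signs.\<close>

lemma pos_isometry_eq_if_eq_or_refl_Im:
  assumes f: "pos_isometry f" and g: "pos_isometry g" and x: "x \<in> H3"
    and alt: "\<And>y. y \<in> H3 \<Longrightarrow> g y = f y \<or> g y = refl_Im (f y)"
  shows "g x = f x"
proof (rule ccontr)
  assume "g x \<noteq> f x"
  obtain Df where Df: "(f has_derivative Df) (at x)" "det (matrix Df) > 0"
    using f x by (auto simp: pos_isometry_def)
  obtain Dg where Dg: "(g has_derivative Dg) (at x)" "det (matrix Dg) > 0"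
    using g x by (auto simp: pos_isometry_def)
  have "isCont (\<lambda>y. g y - f y) x"
    using Df(1) Dg(1) by (intro continuous_intros has_derivative_continuous)
  then obtain e1 where e1: "e1 > 0" "\<forall>y. dist x y < e1 \<longrightarrow> g y - f y \<noteq> 0"
    using continuous_at_avoid[of x "\<lambda>y. g y - f y" 0] \<open>g x \<noteq> f x\<close> by auto
  obtain e2 where e2: "e2 > 0" "ball x e2 \<subseteq> H3"
    using open_H3 x open_contains_ball by blast
  have "((refl_Im \<circ> f) has_derivative (refl_Im \<circ> Df)) (at x)"
    using has_derivative_compose[OF Df(1) linear_imp_has_derivative[OF linear_refl_Im]] by (simp add: o_def)
  moreover have "min e1 e2 > 0" using e1 e2 by simp
  ultimately have "(g has_derivative (refl_Im \<circ> Df)) (at x)"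
  proof (rule has_derivative_transform_within)
    fix y :: "real^3" assume "dist y x < min e1 e2"
    then have "dist x y < e1" "y \<in> H3" using e2 by (auto simp: dist_commute)
    then show "(refl_Im \<circ> f) y = g y" using e1 alt by fastforce
  qed simp
  then have "Dg = refl_Im \<circ> Df" using Dg(1) has_derivative_unique by blast
  moreover have "matrix (refl_Im \<circ> Df) = matrix refl_Im ** matrix Df"
    using Df(1) by (intro matrix_compose linear_refl_Im) (auto dest: has_derivative_linear)
  ultimately have "det (matrix Dg) = - det (matrix Df)" by (simp add: det_mul det_refl_Im)
  then show False using Df(2) Dg(2) by simp
qed

lemma pos_isometry_rigid:
  assumes f: "pos_isometry f" and g: "pos_isometry g"
    and agree: "\<And>q. q \<in> {hpt 0 1, hpt 0 2, hpt (of_real (tanh 1)) (1 / cosh 1)} \<Longrightarrow>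
      \<exists>p\<in>H3. f p = q \<and> g p = q"
    and x: "x \<in> H3"
  shows "g x = f x"
proof (rule pos_isometry_eq_if_eq_or_refl_Im[OF f g x])
  have cosh_1: "cosh (1::real) > 0" by (rule cosh_real_pos)
  have "(tanh (1::real))\<^sup>2 + (1 / cosh 1)\<^sup>2 = ((sinh 1)\<^sup>2 + 1) / (cosh 1)\<^sup>2"
    by (simp add: tanh_def power_divide add_divide_distrib)
  also have "\<dots> = 1" using cosh_1 by (simp add: cosh_square_eq[symmetric])
  finally have tanh_1: "tanh (1::real) \<noteq> 0" "(tanh (1::real))\<^sup>2 + (1 / cosh 1)\<^sup>2 = 1" "1 / cosh (1::real) > 0"
    using cosh_1 by simp_all
  fix y assume y: "y \<in> H3"
  show "g y = f y \<or> g y = refl_Im (f y)"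
  proof (rule eq_or_refl_Im_if_same_hdist[OF _ _ tanh_1])
    show "f y \<in> H3" "g y \<in> H3" using f g y by (auto simp: pos_isometry_def)
    fix q assume "q \<in> {hpt 0 1, hpt 0 2, hpt (of_real (tanh 1)) (1 / cosh 1)}"
    with agree obtain p where "p \<in> H3" "f p = q" "g p = q" by blast
    then show "hdist (f y) q = hdist (g y) q"
      using f g y by (metis pos_isometry_def)
  qed
qed

lemma pos_isometry_eq_if_agree_on_frame:
  assumes f: "pos_isometry f" and g: "pos_isometry g" and "valid_ogeod A" "valid_ogeod B"
    and B: "\<And>s. f (geod_param B s) = geod_param (Some 0, None) (s + b)"
      "\<And>s. g (geod_param B s) = geod_param (Some 0, None) (s + b)"
    and A: "\<And>s. f (geod_param A s) = geod_param (Some (-1), Some 1) (s + a)"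
      "\<And>s. g (geod_param A s) = geod_param (Some (-1), Some 1) (s + a)"
    and x: "x \<in> H3"
  shows "g x = f x"
proof (rule pos_isometry_rigid[OF f g _ x])
  fix q assume "q \<in> {hpt 0 1, hpt 0 2, hpt (of_real (tanh 1)) (1 / cosh 1)}"
  then consider "q = geod_param (Some 0, None) (- b + b)" | "q = geod_param (Some 0, None) (ln 2 - b + b)"
    | "q = geod_param (Some (-1), Some 1) (1 - a + a)"
    by (auto simp: geod_param_axis geod_param_unit)
  then show "\<exists>p\<in>H3. f p = q \<and> g p = q"
    by cases (metis A B geod_param_in_H3 assms(3,4))+
qed

definition adapted_frame :: "(nat \<Rightarrow> ogeod) \<Rightarrow> nat \<Rightarrow> complex \<Rightarrow> (real^3 \<Rightarrow> real^3) \<Rightarrow> bool" where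
  "adapted_frame L n \<delta> \<eta> \<longleftrightarrow> orient_isom \<eta> \<and>
     maps_ogeod \<eta> (L n) (Some 0, None) \<and>
     maps_ogeod \<eta> (L (n - 1)) (Some (-1), Some 1) \<and>
     maps_ogeod \<eta> (L (n + 1)) (Some (- exp (2 * \<delta>)), Some (exp (2 * \<delta>)))"

lemma half_side_length_imp_adapted_frame:
  "half_side_length L n \<delta> \<Longrightarrow> \<exists>\<eta>. adapted_frame L n \<delta> \<eta>"
  unfolding half_side_length_def adapted_frame_def by blast

lemma adapted_frame_shift6:
  assumes "ra_hexagon L" "n > 0"
  shows "adapted_frame L (n + 6) \<delta> \<eta> = adapted_frame L n \<delta> \<eta>"
proof -
  have "L (n + 6) = L n" "L (n + 6 + 1) = L (n + 1)" "L (n + 6 - 1) = L (n - 1)"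
    using assms ra_hexagon_def[of L] by (metis add.commute add.left_commute, metis add.commute add.left_commute,
        metis Suc_diff_1 add_Suc diff_Suc_1)
  then show ?thesis by (simp add: adapted_frame_def)
qed

text \<open>Both sides send \<open>L (Suc n)\<close> onto \<open>[0,\<infinity>]\<close> and \<open>L n\<close> onto \<open>[-1,1]\<close>; the parametrisations
  agree because both maps send the intersection point of \<open>L n\<close> and \<open>L (Suc n)\<close> to \<open>hpt 0 1\<close>.\<close>

lemma adapted_frame_step:
  assumes hex: "ra_hexagon L" and \<eta>: "adapted_frame L n d \<eta>" and \<eta>': "adapted_frame L (Suc n) d' \<eta>'"
    and x: "x \<in> H3"
  shows "\<eta>' x = poincare_ext (side_mat d) (\<eta> x)"
proof -
  let ?g = "poincare_ext (side_mat d) \<circ> \<eta>"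
  have valid: "valid_ogeod (L n)" "valid_ogeod (L (Suc n))"
    using hex by (simp_all add: ra_hexagon_def)
  obtain s1 s2 where meet: "geod_param (L n) s1 = geod_param (L (Suc n)) s2"
    using hex by (force simp: ra_hexagon_def perp_meet_def)
  obtain a b where a: "\<And>s. \<eta> (geod_param (L n) s) = geod_param (Some 0, None) (s + a)"
    and b: "\<And>s. \<eta> (geod_param (L (Suc n)) s) = geod_param (Some (- exp (2 * d)), Some (exp (2 * d))) (s + b)"
    using \<eta> by (auto simp: adapted_frame_def maps_ogeod_def)
  obtain a' b' where a': "\<And>s. \<eta>' (geod_param (L n) s) = geod_param (Some (-1), Some 1) (s + a')"
    and b': "\<And>s. \<eta>' (geod_param (L (Suc n)) s) = geod_param (Some 0, None) (s + b')"
    using \<eta>' by (auto simp: adapted_frame_def maps_ogeod_def)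
  have ga: "?g (geod_param (L n) s) = geod_param (Some (-1), Some 1) (s + (a - 2 * Re d))" for s
    by (simp add: a poincare_ext_side_axis algebra_simps)
  have gb: "?g (geod_param (L (Suc n)) s) = geod_param (Some 0, None) (s + b)" for s
    by (simp add: b poincare_ext_side_sym)
  have "s2 + b' = 0" "s1 + a' = 0" "s2 + b = 0" "s1 + (a - 2 * Re d) = 0"
    using a'[of s1] b'[of s2] ga[of s1] gb[of s2] meet geod_param_axis_eq_unit_iff by metis+
  then have "b = b'" "a - 2 * Re d = a'" by linarith+
  have "pos_isometry \<eta>'" "pos_isometry ?g"
    using \<eta> \<eta>' by (auto simp: adapted_frame_def orient_isom_imp_pos_isometry
        intro!: pos_isometry_comp pos_isometry_poincare_ext cmat_det_side_mat)
  from pos_isometry_eq_if_agree_on_frame[OF this valid] show ?thesis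
    using a' b' ga gb x unfolding \<open>b = b'\<close> \<open>a - 2 * Re d = a'\<close> by simp
qed

definition side_triple :: "complex \<Rightarrow> complex \<Rightarrow> complex \<Rightarrow> cmat" where
  "side_triple a b c = cmat_mult (side_mat c) (cmat_mult (side_mat b) (side_mat a))"

lemma cosh_sinh_exp:
  fixes x :: complex
  shows "cosh x = (exp x + exp (- x)) / 2" "sinh x = (exp x - exp (- x)) / 2"
  by (simp_all add: cosh_def sinh_def scaleR_conv_of_real)

lemma exp_add_diff:
  fixes x y :: complex
  shows "exp (x + y) = exp x * exp y" "exp (- (x + y)) = exp (- x) * exp (- y)"
    "exp (x - y) = exp x * exp (- y)" "exp (- (x - y)) = exp (- x) * exp y"
  by (simp_all add: exp_add[symmetric])

lemma side_triple_eq: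
  assumes "A = cosh (a + c) * cosh b" "B = - sinh (a + c) * cosh b"
    "C = - cosh (a - c) * sinh b" "D = sinh (a - c) * sinh b" "\<kappa> = 2 * swap_scale ^ 3"
  shows "side_triple a b c =
    (\<kappa> * (A + B + C + D), \<kappa> * (A - B + C - D), \<kappa> * (A + B - C - D), \<kappa> * (- A + B + C - D))"
  unfolding assms side_triple_def side_mat_eq cmat_mult_def cosh_sinh_exp exp_add_diff prod.case prod.inject
  by (simp add: field_simps power3_eq_cube)

lemma cmat_mult_eq_scalar_imp_adj:
  assumes "y1 * y4 - y2 * y3 = 1" "cmat_mult (y1, y2, y3, y4) X = (e, 0, 0, e)"
  shows "X = (e * y4, - e * y2, - e * y3, e * y1)"
proof -
  obtain x1 x2 x3 x4 where X: "X = (x1, x2, x3, x4)" by (cases X) auto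
  show ?thesis using assms unfolding X by (simp add: cmat_mult_def) algebra
qed

lemma side_triple_monodromy_coeffs:
  assumes YX: "cmat_mult Y X = (e, 0, 0, e)" and det: "cmat_det Y = 1" and "\<kappa> \<noteq> 0"
    and X: "X = (\<kappa> * (A + B + C + D), \<kappa> * (A - B + C - D), \<kappa> * (A + B - C - D), \<kappa> * (- A + B + C - D))"
    and Y: "Y = (\<kappa> * (A' + B' + C' + D'), \<kappa> * (A' - B' + C' - D'), \<kappa> * (A' + B' - C' - D'), \<kappa> * (- A' + B' + C' - D'))"
  shows "A = - e * A' \<and> B = e * C' \<and> C = e * B' \<and> D = - e * D'"
proof -
  have "X = (e * (\<kappa> * (- A' + B' + C' - D')), - e * (\<kappa> * (A' - B' + C' - D')),
      - e * (\<kappa> * (A' + B' - C' - D')), e * (\<kappa> * (A' + B' + C' + D')))"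
    using cmat_mult_eq_scalar_imp_adj det YX unfolding Y cmat_det_def by auto
  then have "\<kappa> * A = \<kappa> * (- e * A')" "\<kappa> * B = \<kappa> * (e * C')" "\<kappa> * C = \<kappa> * (e * B')"
    "\<kappa> * D = \<kappa> * (- e * D')"
    unfolding X by (simp_all, algebra+)
  then show ?thesis using \<open>\<kappa> \<noteq> 0\<close> by (simp only: mult_cancel_left) simp
qed

lemma cmat_det_side_triple: "cmat_det (side_triple a b c) = 1"
  by (simp add: side_triple_def cmat_det_mult cmat_det_side_mat)

lemma poincare_ext_side_triple:
  "x \<in> H3 \<Longrightarrow> poincare_ext (side_triple a b c) x =
     poincare_ext (side_mat c) (poincare_ext (side_mat b) (poincare_ext (side_mat a) x))"
  by (simp add: side_triple_def poincare_ext_mult poincare_ext_in_H3 cmat_det_side_mat cmat_det_mult)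

lemma hexagon_monodromy:
  assumes hex: "ra_hexagon L" and frame: "\<And>n. n \<in> {1..6} \<Longrightarrow> adapted_frame L n (\<delta> n) (\<eta> n)"
  shows "cmat_mult (side_triple (\<delta> 4) (\<delta> 5) (\<delta> 6)) (side_triple (\<delta> 1) (\<delta> 2) (\<delta> 3)) \<in>
    {(1, 0, 0, 1), (-1, 0, 0, -1)}" (is "?P \<in> _")
proof -
  have step: "\<eta> (Suc n) x = poincare_ext (side_mat (\<delta> n)) (\<eta> n x)" if "n \<in> {1..5}" "x \<in> H3" for n x
    using adapted_frame_step[OF hex frame frame] that by simp
  have "adapted_frame L 6 (\<delta> 6) (\<eta> 6)" "adapted_frame L (Suc 6) (\<delta> 1) (\<eta> 1)"
    using frame[of 6] frame[of 1] adapted_frame_shift6[OF hex, of 1] by simp_all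
  note wrap = adapted_frame_step[OF hex this]
  have "poincare_ext ?P y = y" if y: "y \<in> H3" for y
  proof -
    have "\<eta> 1 ` H3 = H3"
      using frame[of 1] by (simp add: adapted_frame_def orient_isom_def bij_betw_def)
    then obtain x where x: "x \<in> H3" "y = \<eta> 1 x"
      using y by (metis imageE)
    have "\<eta> n x \<in> H3" if "n \<in> {1..6}" for n
      using frame[OF that] x(1) by (auto simp: adapted_frame_def orient_isom_def bij_betw_def)
    then have chain: "y = poincare_ext (side_mat (\<delta> 6)) (poincare_ext (side_mat (\<delta> 5)) (poincare_ext (side_mat (\<delta> 4))
        (poincare_ext (side_mat (\<delta> 3)) (poincare_ext (side_mat (\<delta> 2)) (poincare_ext (side_mat (\<delta> 1)) y)))))"
      using x step[of _ x] wrap[of x] by (simp add: numeral_eq_Suc)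
    have "poincare_ext ?P y =
        poincare_ext (side_triple (\<delta> 4) (\<delta> 5) (\<delta> 6)) (poincare_ext (side_triple (\<delta> 1) (\<delta> 2) (\<delta> 3)) y)"
      using y by (simp add: poincare_ext_mult cmat_det_side_triple)
    also have "\<dots> = y"
      using y chain[symmetric]
      by (simp only: poincare_ext_side_triple poincare_ext_in_H3 cmat_det_side_triple cmat_det_side_mat)
    finally show ?thesis .
  qed
  then show ?thesis
    using poincare_ext_eq_id_imp cmat_det_mult cmat_det_side_triple by simp
qed

theorem theorem7p9:
  fixes L :: "nat \<Rightarrow> ogeod" and \<delta> :: "nat \<Rightarrow> complex"
  assumes "ra_hexagon L"
    and "\<forall>n\<in>{1..6}. half_side_length L n (\<delta> n)"
  shows "\<exists>\<epsilon>::complex. \<epsilon> \<in> {1, -1} \<and>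
    cosh (\<delta> 1 + \<delta> 3) * cosh (\<delta> 2) = \<epsilon> * cosh (\<delta> 4 + \<delta> 6) * cosh (\<delta> 5) \<and>
    - sinh (\<delta> 1 + \<delta> 3) * cosh (\<delta> 2) = \<epsilon> * cosh (\<delta> 4 - \<delta> 6) * sinh (\<delta> 5) \<and>
    - cosh (\<delta> 1 - \<delta> 3) * sinh (\<delta> 2) = \<epsilon> * sinh (\<delta> 4 + \<delta> 6) * cosh (\<delta> 5) \<and>
    sinh (\<delta> 1 - \<delta> 3) * sinh (\<delta> 2) = \<epsilon> * sinh (\<delta> 4 - \<delta> 6) * sinh (\<delta> 5)"
proof -
  have "\<forall>n\<in>{1..6}. \<exists>\<eta>. adapted_frame L n (\<delta> n) \<eta>"
    using assms(2) half_side_length_imp_adapted_frame by blast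
  then obtain \<eta> where "\<And>n. n \<in> {1..6} \<Longrightarrow> adapted_frame L n (\<delta> n) (\<eta> n)"
    by (metis bchoice)
  from hexagon_monodromy[OF assms(1) this] obtain e where e: "e \<in> {1, -1}"
    and P: "cmat_mult (side_triple (\<delta> 4) (\<delta> 5) (\<delta> 6)) (side_triple (\<delta> 1) (\<delta> 2) (\<delta> 3)) = (e, 0, 0, e)"
    by auto
  have "swap_scale ^ 3 \<noteq> 0" by (simp add: swap_scale_def)
  from side_triple_monodromy_coeffs[OF P cmat_det_side_triple _ side_triple_eq side_triple_eq] this
  show ?thesis
    using e by (intro exI[of _ "- e"]) auto
qed

end
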